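(* The linear operator $$P(f):=\Big[\frac{\alpha_0q^0-1}{\kappa_0}\,n_h\sqrt{1+|\mathbf u_h|^2}+\frac{\Psi(\beta_0)-q^0}{\kappa_0}\,n_h\alpha_h+\beta_0\,n_h\mathbf u_h\cdot\mathbf q\Big]\sqrt{J^0},\qquad h=f\sqrt{J^0},$$ is the orthogonal projection from $L^2(\mathbb{R}^3)$ onto the five-dimensional space $N=\mathrm{span}\{\sqrt{J^0},\,q^\mu\sqrt{J^0}\ (\mu=0,1,2,3)\}$ with respect to the scalar product $\langle f,g\rangle_{q_0}=\int_{\mathbb{R}^3}\frac{f(\mathbf q)g(\mathbf q)}{q^0}\,d\mathbf q$. In particular, $P$ is self-adjoint with respect to that scalar product.
   Context: Dimensionless setting: $q^0=\sqrt{1+|\mathbf q|^2}$, $q^\mu=(q^0,\mathbf q)$, $K_j(\beta)=\int_0^\infty\cosh(jr)e^{-\beta\cosh r}dr$, $M(\beta)=\int_{\mathbb{R}^3}e^{-\beta\sqrt{1+|\mathbf p|^2}}d\mathbf p$, $\Psi(\beta)=\frac3\beta+\frac{K_1(\beta)}{K_2(\beta)}$. Fix $\beta_0>0$, $J^0(\mathbf q)=e^{-\beta_0q^0}/M(\beta_0)$, $\alpha_0=K_1(\beta_0)/K_2(\beta_0)$ and $\kappa_0=\frac{3\alpha_0}{\beta_0}+\alpha_0^2-1$. For $h=f\sqrt{J^0}$ the symbols are defined by $n_h\sqrt{1+|\mathbf u_h|^2}:=\int h\,d\mathbf q$, $n_h\alpha_h:=\int h\,\frac{d\mathbf q}{q^0}$,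 $n_h\mathbf u_h:=\int\mathbf q\,h\,\frac{d\mathbf q}{q^0}$ (linear in $f$). *)

theory Defs
  imports "HOL-Analysis.Analysis"
begin

type_synonym vec3 = "real ^ 3"

definition q0 :: "vec3 \<Rightarrow> real" where
  "q0 q = sqrt (1 + (norm q)^2)"

definition Kfun :: "real \<Rightarrow> real \<Rightarrow> real" where
  "Kfun j \<beta> = (LINT r:{0..}|lborel. cosh (j * r) * exp (- \<beta> * cosh r))"

definition Mfun :: "real \<Rightarrow> real" where
  "Mfun \<beta> = (\<integral>p. exp (- \<beta> * q0 p) \<partial>(lborel :: vec3 measure))"

definition Psi :: "real \<Rightarrow> real" where
  "Psi \<beta> = 3 / \<beta> + Kfun 1 \<beta> / Kfun 2 \<beta>"

definition J0 :: "real \<Rightarrow> vec3 \<Rightarrow> real" where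
  "J0 \<beta>0 q = exp (- \<beta>0 * q0 q) / Mfun \<beta>0"

definition sqrtJ0 :: "real \<Rightarrow> vec3 \<Rightarrow> real" where
  "sqrtJ0 \<beta>0 q = sqrt (J0 \<beta>0 q)"

definition alpha0 :: "real \<Rightarrow> real" where
  "alpha0 \<beta>0 = Kfun 1 \<beta>0 / Kfun 2 \<beta>0"

definition kappa0 :: "real \<Rightarrow> real" where
  "kappa0 \<beta>0 = 3 * alpha0 \<beta>0 / \<beta>0 + (alpha0 \<beta>0)^2 - 1"

text \<open>With h = f sqrt(J0): n_h sqrt(1+|u_h|^2) = \<integral> h dq\<close>
definition nh_energy :: "real \<Rightarrow> (vec3 \<Rightarrow> real) \<Rightarrow> real" where
  "nh_energy \<beta>0 f = (\<integral>q. f q * sqrtJ0 \<beta>0 q \<partial>lborel)"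

text \<open>n_h alpha_h = \<integral> h dq / q^0\<close>
definition nh_alpha :: "real \<Rightarrow> (vec3 \<Rightarrow> real) \<Rightarrow> real" where
  "nh_alpha \<beta>0 f = (\<integral>q. f q * sqrtJ0 \<beta>0 q / q0 q \<partial>lborel)"

text \<open>n_h u_h = \<integral> q h dq / q^0\<close>
definition nh_u :: "real \<Rightarrow> (vec3 \<Rightarrow> real) \<Rightarrow> vec3" where
  "nh_u \<beta>0 f = (\<integral>q. (f q * sqrtJ0 \<beta>0 q / q0 q) *\<^sub>R q \<partial>lborel)"

definition Pop :: "real \<Rightarrow> (vec3 \<Rightarrow> real) \<Rightarrow> vec3 \<Rightarrow> real" where
  "Pop \<beta>0 f q =
     ((alpha0 \<beta>0 * q0 q - 1) / kappa0 \<beta>0 * nh_energy \<beta>0 f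
      + (Psi \<beta>0 - q0 q) / kappa0 \<beta>0 * nh_alpha \<beta>0 f
      + \<beta>0 * (nh_u \<beta>0 f \<bullet> q)) * sqrtJ0 \<beta>0 q"

definition wip :: "(vec3 \<Rightarrow> real) \<Rightarrow> (vec3 \<Rightarrow> real) \<Rightarrow> real" where
  "wip f g = (\<integral>q. f q * g q / q0 q \<partial>lborel)"

definition L2 :: "(vec3 \<Rightarrow> real) \<Rightarrow> bool" where
  "L2 f \<longleftrightarrow> f \<in> borel_measurable lborel \<and> integrable lborel (\<lambda>q. (f q)^2)"

definition inN :: "real \<Rightarrow> (vec3 \<Rightarrow> real) \<Rightarrow> bool" where
  "inN \<beta>0 g \<longleftrightarrow> (\<exists>a b0 (b::vec3). \<forall>q. g q = (a + b0 * q0 q + b \<bullet> q) * sqrtJ0 \<beta>0 q)"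

end

theory Submission
  imports Defs "HOL-Real_Asymp.Real_Asymp"
begin

text \<open>Everything reduces to integrals of radial weights. In rapidity coordinates
  \<open>|q| = sinh r\<close>, \<open>q\<^sup>0 = cosh r\<close>, Lebesgue measure on \<open>\<real>\<^sup>3\<close> becomes \<open>4\<pi> sinh\<^sup>2 r cosh r dr\<close>, so the
  moments of \<open>J\<^sup>0\<close> are quotients of the integrals \<open>\<integral>\<^sub>0\<^sup>\<infinity> sinh\<^sup>k r cosh\<^sup>m r exp (-\<beta> cosh r) dr\<close>,
  which integrations by parts relate to \<open>K\<^sub>1\<close> and \<open>K\<^sub>2\<close>; reflections and permutations of the
  coordinates kill the odd moments and make the second moment isotropic. This gives the moments
  \<open>(a + \<Psi> b\<^sub>0, \<alpha>\<^sub>0 a + b\<^sub>0, c/\<beta>)\<close> of \<open>(a + b\<^sub>0 q\<^sup>0 + c\<cdot>q) \<surd>J\<^sup>0\<close>, while \<open>\<langle>h, (a + b\<^sub>0 q\<^sup>0 + c\<cdot>q) \<surd>J\<^sup>0\<rangle>\<^sub>q\<^sub>0\<close>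
  is the combination \<open>a n\<^sub>h\<alpha>\<^sub>h + b\<^sub>0 n\<^sub>h\<surd>(1+|u\<^sub>h|\<^sup>2) + c\<cdot>n\<^sub>hu\<^sub>h\<close> of the moments of \<open>h\<close>. Since
  \<open>\<kappa>\<^sub>0 = \<alpha>\<^sub>0 \<Psi> - 1 > 0\<close> by a strict Cauchy--Schwarz inequality, \<open>P f\<close> lies in \<open>N\<close> and has the same
  moments as \<open>f\<close>, so \<open>f - P f\<close> is orthogonal to \<open>N\<close>; and \<open>\<langle>P f, g\<rangle>\<^sub>q\<^sub>0\<close> is a symmetric bilinear
  expression in the moments of \<open>f\<close> and \<open>g\<close>.\<close>

section \<open>Hyperbolic integrals on the half-line\<close>

lemma borel_measurable_sinh [measurable]: "(sinh :: real \<Rightarrow> real) \<in> borel_measurable borel"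
  by (intro borel_measurable_continuous_onI continuous_intros)

lemma borel_measurable_cosh [measurable]: "(cosh :: real \<Rightarrow> real) \<in> borel_measurable borel"
  by (intro borel_measurable_continuous_onI continuous_intros)

lemma power_le_fact_mult_exp: "0 \<le> (x::real) \<Longrightarrow> x ^ n \<le> fact n * exp x"
proof -
  assume x: "0 \<le> x"
  have "(\<Sum>i\<in>{n}. x ^ i /\<^sub>R fact i) \<le> (\<Sum>i. x ^ i /\<^sub>R fact i)"
    by (rule sum_le_suminf) (use x in \<open>auto intro: summable_exp\<close>)
  then have "x ^ n / fact n \<le> exp x" by (simp add: exp_def divide_inverse mult.commute)
  then show ?thesis by (simp add: divide_le_eq mult.commute)
qed

lemma half_le_cosh: "(r::real) / 2 \<le> cosh r"
proof -
  have "r \<le> exp r" using exp_ge_add_one_self[of r] by linarith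
  then show ?thesis by (simp add: cosh_field_def add_increasing2 divide_right_mono)
qed

lemma abs_sinh_le_cosh: "\<bar>sinh (x::real)\<bar> \<le> cosh x"
  by (metis cosh_minus sinh_le_cosh_real sinh_minus abs_if neg_le_iff_le)

lemma set_integrable_exp_neg_Ioi:
  assumes g: "(g::real) > 0"
  shows "set_integrable lborel {0<..} (\<lambda>r. exp (- g * r))"
proof -
  have "set_integrable lborel (einterval 0 \<infinity>) (\<lambda>r. exp (- g * r))"
  proof (rule interval_integral_FTC_nonneg(1)[where F="\<lambda>r. - exp (- g * r) / g" and A="-1/g" and B=0])
    show "DERIV (\<lambda>r. - exp (- g * r) / g) x :> exp (- g * x)" for x
      using g by (auto intro!: derivative_eq_intros simp: field_simps)
    show "(((\<lambda>r. - exp (- g * r) / g) \<circ> real_of_ereal) \<longlongrightarrow> (-1/g)) (at_right 0)"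
      unfolding zero_ereal_def ereal_tendsto_simps1
      using g by (rule_tac tendsto_within_subset[OF _ subset_UNIV]) (auto intro!: tendsto_eq_intros)
    show "(((\<lambda>r. - exp (- g * r) / g) \<circ> real_of_ereal) \<longlongrightarrow> 0) (at_left \<infinity>)"
      unfolding ereal_tendsto_simps1 using g by real_asymp
  qed auto
  then show ?thesis by (simp add: einterval_def greaterThan_def)
qed

lemma cosh_power_mult_exp_le:
  assumes b: "(b::real) > 0" and r: "0 \<le> r"
  shows "cosh r ^ n * exp (- b * cosh r) \<le> fact n * (2/b)^n * exp (- (b/4) * r)"
proof -
  have c: "0 \<le> cosh r" by (simp add: order_trans[OF _ cosh_real_ge_1])
  have "cosh r ^ n = (2/b)^n * (b * cosh r / 2)^n"
    using b by (simp add: power_mult_distrib[symmetric])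
  also have "\<dots> \<le> (2/b)^n * (fact n * exp (b * cosh r / 2))"
    using b c by (intro mult_left_mono power_le_fact_mult_exp) auto
  finally have "cosh r ^ n * exp (- b * cosh r) \<le> fact n * (2/b)^n * (exp (b * cosh r / 2) * exp (- b * cosh r))"
    by (simp add: mult_right_mono algebra_simps)
  also have "exp (b * cosh r / 2) * exp (- b * cosh r) = exp (- (b/2) * cosh r)"
    by (simp flip: exp_add)
  also have "exp (- (b/2) * cosh r) \<le> exp (- (b/4) * r)"
    using half_le_cosh[of r] b by simp
  finally show ?thesis using b by (simp add: mult_left_mono)
qed

lemma set_integrable_sinh_cosh_power_exp:
  assumes b: "(b::real) > 0"
  shows "set_integrable lborel {0<..} (\<lambda>r. sinh r ^ k * cosh r ^ m * exp (- b * cosh r))"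
proof (rule set_integrable_bound[where f="\<lambda>r. (fact (k + m) * (2/b)^(k + m)) * exp (- (b/4) * r)"])
  show "set_integrable lborel {0<..} (\<lambda>r. (fact (k + m) * (2/b)^(k + m)) * exp (- (b/4) * r))"
    using set_integrable_exp_neg_Ioi[of "b/4"] b by (intro set_integrable_mult_right) auto
  show "set_borel_measurable lborel {0<..} (\<lambda>r. sinh r ^ k * cosh r ^ m * exp (- b * cosh r))"
    unfolding set_borel_measurable_def
    by (intro borel_measurable_scaleR borel_measurable_indicator)
      (auto intro!: borel_measurable_continuous_onI continuous_intros)
  show "AE r in lborel. r \<in> {0<..} \<longrightarrow>
      norm (sinh r ^ k * cosh r ^ m * exp (- b * cosh r)) \<le> norm (fact (k + m) * (2/b)^(k + m) * exp (- (b/4) * r))"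
  proof (intro AE_I2 impI)
    fix r :: real assume "r \<in> {0<..}"
    have "\<bar>sinh r ^ k * cosh r ^ m * exp (- b * cosh r)\<bar> = \<bar>sinh r\<bar> ^ k * cosh r ^ m * exp (- b * cosh r)"
      by (simp add: abs_mult power_abs)
    also have "\<dots> \<le> cosh r ^ (k + m) * exp (- b * cosh r)"
      unfolding power_add by (intro mult_right_mono power_mono abs_sinh_le_cosh) auto
    also have "\<dots> \<le> fact (k + m) * (2/b)^(k + m) * exp (- (b/4) * r)"
      using \<open>r \<in> {0<..}\<close> b by (intro cosh_power_mult_exp_le) auto
    finally show "norm (sinh r ^ k * cosh r ^ m * exp (- b * cosh r)) \<le> norm (fact (k + m) * (2/b)^(k + m) * exp (- (b/4) * r))"
      using b by simp
  qed
qed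

lemma set_integrable_cosh_double_exp:
  assumes b: "(b::real) > 0"
  shows "set_integrable lborel {0<..} (\<lambda>r. cosh (2 * r) * exp (- b * cosh r))"
proof -
  have "set_integrable lborel {0<..}
      (\<lambda>r. sinh r ^ 0 * cosh r ^ 2 * exp (- b * cosh r) + sinh r ^ 2 * cosh r ^ 0 * exp (- b * cosh r))"
    using set_integrable_sinh_cosh_power_exp[OF b] by (intro set_integral_add)
  then show ?thesis by (simp add: cosh_double distrib_right)
qed

lemma set_integral_Ioi_eq_by_parts:
  fixes F f g :: "real \<Rightarrow> real"
  assumes F: "\<And>x. (F has_real_derivative f x - c * g x) (at x)"
    and cont: "continuous_on UNIV f" "continuous_on UNIV g"
    and int: "set_integrable lborel {0<..} f" "set_integrable lborel {0<..} g"
    and F0: "F 0 = 0" and Ftop: "(F \<longlongrightarrow> 0) at_top"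
  shows "(LINT x:{0<..}|lborel. f x) = c * (LINT x:{0<..}|lborel. g x)"
proof -
  have int': "set_integrable lborel {0<..} (\<lambda>x. f x - c * g x)"
    using int by (intro set_integral_diff set_integrable_mult_right)
  have "(LBINT x=0..\<infinity>. f x - c * g x) = 0 - 0"
  proof (rule interval_integral_FTC_integrable[where F=F])
    show "(F has_vector_derivative f x - c * g x) (at x)" for x
      using F by (simp add: has_real_derivative_iff_has_vector_derivative[symmetric])
    show "isCont (\<lambda>x. f x - c * g x) x" for x
      using cont by (intro continuous_intros) (simp_all add: continuous_on_eq_continuous_at)
    show "set_integrable lborel (einterval 0 \<infinity>) (\<lambda>x. f x - c * g x)"
      using int' by (simp add: einterval_def greaterThan_def)
    have "(F \<longlongrightarrow> 0) (at 0)" using DERIV_isCont[OF F, of 0] F0 by (metis isCont_def)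
    then show "((F \<circ> real_of_ereal) \<longlongrightarrow> 0) (at_right 0)"
      unfolding zero_ereal_def ereal_tendsto_simps1 by (rule tendsto_within_subset) simp
    show "((F \<circ> real_of_ereal) \<longlongrightarrow> 0) (at_left \<infinity>)"
      unfolding ereal_tendsto_simps1 by (rule Ftop)
  qed auto
  then have "(LINT x:{0<..}|lborel. f x - c * g x) = 0"
    by (simp add: zero_ereal_def interval_integral_to_infinity_eq)
  then show ?thesis
    using set_integral_diff(2)[OF int(1) set_integrable_mult_right[OF int(2)]] by simp
qed

definition hyp_moment :: "nat \<Rightarrow> nat \<Rightarrow> real \<Rightarrow> real" where
  "hyp_moment k m b = (LINT r:{0<..}|lborel. sinh r ^ k * cosh r ^ m * exp (- b * cosh r))"

lemma set_integral_Ici_eq_Ioi: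
  fixes f :: "real \<Rightarrow> real"
  assumes [measurable]: "f \<in> borel_measurable borel"
  shows "(LINT x:{0..}|lborel. f x) = (LINT x:{0<..}|lborel. f x)"
  unfolding set_lebesgue_integral_def
proof (rule integral_cong_AE)
  show "AE x in lborel. indicator {0..} x *\<^sub>R f x = indicator {0<..} x *\<^sub>R f x"
    using AE_lborel_singleton[of 0] by eventually_elim (auto simp: indicator_def)
qed auto

lemma Kfun_1_eq:
  assumes b: "(b::real) > 0"
  shows "Kfun 1 b = b * hyp_moment 2 0 b"
proof -
  have "hyp_moment 2 0 b = (1/b) * (LINT r:{0<..}|lborel. sinh r ^ 0 * cosh r ^ 1 * exp (- b * cosh r))"
    unfolding hyp_moment_def
  proof (rule set_integral_Ioi_eq_by_parts[where F="\<lambda>r. - sinh r * exp (- b * cosh r) / b",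
        OF _ _ _ set_integrable_sinh_cosh_power_exp[OF b] set_integrable_sinh_cosh_power_exp[OF b]])
    show "((\<lambda>r. - sinh r * exp (- b * cosh r) / b) has_real_derivative
        sinh x ^ 2 * cosh x ^ 0 * exp (- b * cosh x) - 1 / b * (sinh x ^ 0 * cosh x ^ 1 * exp (- b * cosh x))) (at x)" for x
      using b by (auto intro!: derivative_eq_intros simp: field_simps power2_eq_square)
    show "((\<lambda>r. - sinh r * exp (- b * cosh r) / b) \<longlongrightarrow> 0) at_top" using b by real_asymp
  qed (auto intro!: continuous_intros)
  then show ?thesis
    unfolding Kfun_def using b by (subst set_integral_Ici_eq_Ioi) auto
qed

lemma Kfun_2_eq:
  assumes b: "(b::real) > 0"
  shows "Kfun 2 b = b * hyp_moment 2 1 b"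
proof -
  have "hyp_moment 2 1 b = (1/b) * (LINT r:{0<..}|lborel. cosh (2 * r) * exp (- b * cosh r))"
    unfolding hyp_moment_def
  proof (rule set_integral_Ioi_eq_by_parts[where F="\<lambda>r. - sinh r * cosh r * exp (- b * cosh r) / b",
        OF _ _ _ set_integrable_sinh_cosh_power_exp[OF b] set_integrable_cosh_double_exp[OF b]])
    show "((\<lambda>r. - sinh r * cosh r * exp (- b * cosh r) / b) has_real_derivative
        sinh x ^ 2 * cosh x ^ 1 * exp (- b * cosh x) - 1 / b * (cosh (2 * x) * exp (- b * cosh x))) (at x)" for x
      using b unfolding cosh_double
      by (auto intro!: derivative_eq_intros simp: field_simps power2_eq_square)
    show "((\<lambda>r. - sinh r * cosh r * exp (- b * cosh r) / b) \<longlongrightarrow> 0) at_top" using b by real_asymp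
  qed (auto intro!: continuous_intros)
  then show ?thesis
    unfolding Kfun_def using b by (subst set_integral_Ici_eq_Ioi) auto
qed

lemma hyp_moment_4_0:
  assumes b: "(b::real) > 0"
  shows "hyp_moment 4 0 b = 3 / b * hyp_moment 2 1 b"
  unfolding hyp_moment_def
proof (rule set_integral_Ioi_eq_by_parts[where F="\<lambda>r. - (sinh r ^ 3) * exp (- b * cosh r) / b",
      OF _ _ _ set_integrable_sinh_cosh_power_exp[OF b] set_integrable_sinh_cosh_power_exp[OF b]])
  show "((\<lambda>r. - (sinh r ^ 3) * exp (- b * cosh r) / b) has_real_derivative
      sinh x ^ 4 * cosh x ^ 0 * exp (- b * cosh x) - 3 / b * (sinh x ^ 2 * cosh x ^ 1 * exp (- b * cosh x))) (at x)" for x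
    using b by (auto intro!: derivative_eq_intros
        simp: field_simps power2_eq_square power3_eq_cube power4_eq_xxxx)
  show "((\<lambda>r. - (sinh r ^ 3) * exp (- b * cosh r) / b) \<longlongrightarrow> 0) at_top" using b by real_asymp
qed (auto intro!: continuous_intros)

lemma hyp_moment_2_2:
  assumes b: "(b::real) > 0"
  shows "hyp_moment 2 2 b = hyp_moment 2 0 b + hyp_moment 4 0 b"
proof -
  have "sinh r ^ 2 * cosh r ^ 2 * exp (- b * cosh r)
      = sinh r ^ 2 * cosh r ^ 0 * exp (- b * cosh r) + sinh r ^ 4 * cosh r ^ 0 * exp (- b * cosh r)" for r
    by (simp only: cosh_square_eq) (simp add: algebra_simps power2_eq_square power4_eq_xxxx)
  then show ?thesis
    unfolding hyp_moment_def
    using set_integral_add(2)[OF set_integrable_sinh_cosh_power_exp set_integrable_sinh_cosh_power_exp, OF b b]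
    by presburger
qed

lemma set_integral_Ioi_pos:
  fixes g :: "real \<Rightarrow> real"
  assumes gc: "continuous_on UNIV g" and gi: "set_integrable lborel {0<..} g"
    and nn: "\<And>x. 0 < x \<Longrightarrow> 0 \<le> g x" and z: "0 < z" "0 < g z"
  shows "0 < (LINT x:{0<..}|lborel. g x)"
proof -
  have int: "integrable lborel (\<lambda>x. indicator {0<..} x *\<^sub>R g x)"
    using gi by (simp add: set_integrable_def)
  have nn': "AE x in lborel. 0 \<le> indicator {0<..} x *\<^sub>R g x"
    by (auto simp: indicator_def nn)
  obtain d where d: "d > 0" "\<And>y. \<bar>y - z\<bar> < d \<Longrightarrow> \<bar>g y - g z\<bar> < g z"
    using gc z(2) unfolding continuous_on_eq_continuous_at[OF open_UNIV] continuous_at_eps_delta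
    by (metis UNIV_I dist_real_def)
  define e where "e = min d z"
  have e: "e > 0" "e \<le> d" "e \<le> z" using d z by (auto simp: e_def)
  have pos: "0 < indicator {0<..} y *\<^sub>R g y" if "y \<in> {z - e <..< z + e}" for y
  proof -
    have "\<bar>y - z\<bar> < d" using that e by auto
    then have "0 < g y" using d(2)[of y] by linarith
    moreover have "0 < y" using that e by auto
    ultimately show ?thesis by simp
  qed
  show ?thesis
  proof (rule ccontr)
    assume "\<not> ?thesis"
    then have "(LINT x:{0<..}|lborel. g x) = 0"
      using integral_nonneg_AE[OF nn'] unfolding set_lebesgue_integral_def by linarith
    then have "AE x in lborel. indicator {0<..} x *\<^sub>R g x = 0"
      using integral_nonneg_eq_0_iff_AE[OF int nn'] unfolding set_lebesgue_integral_def by simp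
    then have "AE x in lborel. x \<notin> {z - e <..< z + e}"
      by eventually_elim (use pos in force)
    then have "{z - e <..< z + e} \<in> null_sets lborel"
      by (subst AE_iff_null_sets) auto
    then have "emeasure lborel {z - e <..< z + e} = 0" by auto
    then show False using e by simp
  qed
qed

lemma hyp_moment_2_pos:
  assumes b: "(b::real) > 0"
  shows "0 < hyp_moment 2 m b"
  unfolding hyp_moment_def
  by (rule set_integral_Ioi_pos[where z=1, OF _ set_integrable_sinh_cosh_power_exp[OF b]])
     (auto intro!: continuous_intros)

lemma hyp_moment_Cauchy_Schwarz_strict:
  assumes b: "(b::real) > 0"
  shows "hyp_moment 2 1 b ^ 2 < hyp_moment 2 0 b * hyp_moment 2 2 b"
proof -
  define t where "t = hyp_moment 2 1 b / hyp_moment 2 0 b"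
  have A0: "hyp_moment 2 0 b > 0" by (rule hyp_moment_2_pos[OF b])
  let ?e = "\<lambda>m r. sinh r ^ 2 * cosh r ^ m * exp (- b * cosh r)"
  let ?g = "\<lambda>r. ?e 2 r - 2 * t * ?e 1 r + t^2 * ?e 0 r"
  note i = set_integrable_sinh_cosh_power_exp[OF b, of 2]
  have i01: "set_integrable lborel {0<..} (\<lambda>r. ?e 2 r - 2 * t * ?e 1 r)"
    by (intro set_integral_diff(1) set_integrable_mult_right i)
  have i2: "set_integrable lborel {0<..} (\<lambda>r. t^2 * ?e 0 r)"
    by (intro set_integrable_mult_right i)
  have gi: "set_integrable lborel {0<..} ?g"
    using i01 i2 by (rule set_integral_add(1))
  have "(LINT r:{0<..}|lborel. ?g r) = hyp_moment 2 2 b - 2 * t * hyp_moment 2 1 b + t^2 * hyp_moment 2 0 b"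
    unfolding hyp_moment_def
    by (simp only: set_integral_add(2)[OF i01 i2] set_integral_diff(2)[OF i set_integrable_mult_right[OF i]]
        set_integral_mult_right)
  also have "\<dots> = hyp_moment 2 2 b - hyp_moment 2 1 b ^ 2 / hyp_moment 2 0 b"
    using A0 by (simp add: t_def field_simps power2_eq_square)
  finally have eq: "(LINT r:{0<..}|lborel. ?g r) = hyp_moment 2 2 b - hyp_moment 2 1 b ^ 2 / hyp_moment 2 0 b" .
  have sq: "?g r = sinh r ^ 2 * exp (- b * cosh r) * (cosh r - t) ^ 2" for r
    by (simp add: power2_eq_square algebra_simps)
  define z where "z = (if cosh 1 = t then 2 else (1::real))"
  have z: "z > 0" "cosh z \<noteq> t" by (auto simp: z_def)
  have "0 < (LINT r:{0<..}|lborel. ?g r)"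
  proof (rule set_integral_Ioi_pos[OF _ gi _ z(1)])
    show "continuous_on UNIV ?g" by (intro continuous_intros)
    show "0 \<le> ?g r" for r unfolding sq by simp
    show "0 < ?g z" unfolding sq using z by simp
  qed
  then have "hyp_moment 2 1 b ^ 2 / hyp_moment 2 0 b < hyp_moment 2 2 b" using eq by linarith
  then show ?thesis using A0 by (simp add: divide_less_eq mult.commute)
qed

lemma alpha0_eq_hyp_moment:
  assumes b: "(b::real) > 0"
  shows "alpha0 b = hyp_moment 2 0 b / hyp_moment 2 1 b"
  using b hyp_moment_2_pos[OF b, of 1] by (simp add: alpha0_def Kfun_1_eq Kfun_2_eq)

lemma Psi_eq: "Psi b = 3 / b + alpha0 b"
  by (simp add: Psi_def alpha0_def)

lemma kappa0_eq: "kappa0 b = alpha0 b * Psi b - 1"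
  by (simp add: kappa0_def Psi_eq algebra_simps power2_eq_square)

lemma kappa0_pos:
  assumes b: "(b::real) > 0"
  shows "kappa0 b > 0"
proof -
  have A1: "hyp_moment 2 1 b > 0" by (rule hyp_moment_2_pos[OF b])
  have "kappa0 b = (hyp_moment 2 0 b * hyp_moment 2 2 b - hyp_moment 2 1 b ^ 2) / hyp_moment 2 1 b ^ 2"
    using A1 b unfolding kappa0_def alpha0_eq_hyp_moment[OF b] hyp_moment_2_2[OF b] hyp_moment_4_0[OF b]
    by (simp add: field_simps power2_eq_square)
  then show ?thesis using hyp_moment_Cauchy_Schwarz_strict[OF b] A1 by simp
qed

section \<open>Radial integration in momentum space\<close>

lemma borel_measurable_q0 [measurable]: "q0 \<in> borel_measurable borel"
  unfolding q0_def[abs_def] by (intro borel_measurable_continuous_onI continuous_intros)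

lemma q0_ge_1: "1 \<le> q0 q"
  by (simp add: q0_def)

lemma q0_pos [simp]: "0 < q0 q"
  using q0_ge_1[of q] by linarith

lemma q0_nonneg [simp]: "0 \<le> q0 q"
  using q0_pos[of q] by linarith

lemma q0_nonzero [simp]: "q0 q \<noteq> 0"
  using q0_pos[of q] by linarith

lemma abs_q0 [simp]: "\<bar>q0 q\<bar> = q0 q"
  using q0_pos[of q] by linarith

lemma norm_le_q0: "norm q \<le> q0 q"
  by (simp add: q0_def real_le_rsqrt)

definition rapidity :: "vec3 \<Rightarrow> real" where
  "rapidity q = arsinh (norm q)"

lemma cosh_rapidity: "cosh (rapidity q) = q0 q"
  by (simp add: rapidity_def q0_def cosh_arsinh_real add.commute)

lemma borel_measurable_rapidity [measurable]: "rapidity \<in> borel_measurable borel"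
  unfolding rapidity_def
  by (intro borel_measurable_continuous_onI continuous_on_compose2[OF continuous_on_arsinh[of UNIV]]
      continuous_intros) auto

lemma emeasure_distr_rapidity_atMost:
  "emeasure (distr lborel borel rapidity) {..a} = ennreal (if a < 0 then 0 else 4 * pi / 3 * sinh a ^ 3)"
proof -
  have "rapidity -` {..a} \<inter> space lborel = cball (0::vec3) (sinh a)"
    by (auto simp: rapidity_def cball_def) (metis sinh_real_le_iff sinh_arsinh_real)+
  then have "emeasure (distr lborel borel rapidity) {..a} = emeasure lborel (cball (0::vec3) (sinh a))"
    by (subst emeasure_distr) auto
  also have "\<dots> = ennreal (if a < 0 then 0 else 4 * pi / 3 * sinh a ^ 3)"
    by (cases "a < 0") (auto simp: emeasure_cball eval_unit_ball_vol)
  finally show ?thesis .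
qed

definition radial_density :: "real \<Rightarrow> real" where
  "radial_density r = indicator {0<..} r * (4 * pi * sinh r ^ 2 * cosh r)"

lemma borel_measurable_radial_density [measurable]: "radial_density \<in> borel_measurable borel"
  unfolding radial_density_def by measurable

lemma emeasure_radial_density_atMost:
  "emeasure (density lborel radial_density) {..a} = ennreal (if a < 0 then 0 else 4 * pi / 3 * sinh a ^ 3)"
proof -
  have "emeasure (density lborel radial_density) {..a}
      = (\<integral>\<^sup>+ r. ennreal (indicator {0..a} r * (4 * pi * sinh r ^ 2 * cosh r)) \<partial>lborel)"
    by (subst emeasure_density) (auto intro!: nn_integral_cong simp: radial_density_def indicator_def)
  also have "\<dots> = ennreal (if a < 0 then 0 else 4 * pi / 3 * sinh a ^ 3)"
  proof (cases "a < 0")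
    case False
    have int: "integrable lborel (\<lambda>r. indicator {0..a} r * (4 * pi * sinh r ^ 2 * cosh r))"
      using borel_integrable_atLeastAtMost'[of 0 a "\<lambda>r. 4 * pi * sinh r ^ 2 * cosh r"]
      by (simp add: set_integrable_def continuous_intros)
    have "(\<integral> r. indicator {0..a} r *\<^sub>R (4 * pi * sinh r ^ 2 * cosh r) \<partial>lborel)
        = 4 * pi / 3 * sinh a ^ 3 - 4 * pi / 3 * sinh 0 ^ 3"
    proof (rule integral_FTC_atLeastAtMost)
      show "((\<lambda>r. 4 * pi / 3 * sinh r ^ 3) has_vector_derivative 4 * pi * sinh x ^ 2 * cosh x) (at x within {0..a})" for x
        unfolding has_real_derivative_iff_has_vector_derivative[symmetric]
        by (auto intro!: derivative_eq_intros simp: power2_eq_square)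
    qed (use False in \<open>auto intro!: continuous_intros\<close>)
    then show ?thesis
      using False by (subst nn_integral_eq_integral[OF int]) (auto simp: indicator_def)
  qed simp
  finally show ?thesis .
qed

lemma distr_lborel_rapidity: "distr lborel borel rapidity = density lborel radial_density"
proof (rule measure_eqI_generator_eq[where E="range (\<lambda>a::real. {..a})" and \<Omega>=UNIV and A="\<lambda>i. {..real i}"])
  show "Int_stable (range (\<lambda>a::real. {..a}))"
    by (auto simp: Int_stable_def intro!: image_eqI[where x="min _ _"])
  show "sets (distr lborel borel rapidity) = sigma_sets UNIV (range atMost)"
    by (simp add: borel_eq_atMost sets_measure_of)
  show "sets (density lborel radial_density) = sigma_sets UNIV (range atMost)"
    by (simp add: borel_eq_atMost sets_measure_of)
  show "emeasure (distr lborel borel rapidity) X = emeasure (density lborel radial_density) X"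
    if "X \<in> range atMost" for X
    using that by (auto simp: emeasure_distr_rapidity_atMost emeasure_radial_density_atMost)
  show "emeasure (distr lborel borel rapidity) {..real i} \<noteq> \<infinity>" for i
    by (simp add: emeasure_distr_rapidity_atMost)
  show "(\<Union>i. {..real i}) = UNIV"
    by (auto intro: real_arch_simple)
qed auto

lemma
  fixes H :: "real \<Rightarrow> real"
  assumes [measurable]: "H \<in> borel_measurable borel"
  shows integral_q0_radial:
      "(\<integral>q. H (q0 q) \<partial>lborel) = (LINT r:{0<..}|lborel. 4 * pi * sinh r ^ 2 * cosh r * H (cosh r))"
    and integrable_q0_radial:
      "integrable lborel (\<lambda>q. H (q0 q)) \<longleftrightarrow>
       set_integrable lborel {0<..} (\<lambda>r. 4 * pi * sinh r ^ 2 * cosh r * H (cosh r))"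
proof -
  have dens: "(\<lambda>r. radial_density r * H (cosh r))
      = (\<lambda>r. indicator {0<..} r * (4 * pi * sinh r ^ 2 * cosh r * H (cosh r)))"
    by (auto simp: radial_density_def fun_eq_iff)
  have nn: "AE r in lborel. 0 \<le> radial_density r"
    by (simp add: radial_density_def)
  have "(\<integral>q. H (q0 q) \<partial>lborel) = integral\<^sup>L (distr lborel borel rapidity) (\<lambda>r. H (cosh r))"
    by (subst integral_distr) (auto simp: cosh_rapidity)
  also have "\<dots> = (\<integral>r. radial_density r *\<^sub>R H (cosh r) \<partial>lborel)"
    unfolding distr_lborel_rapidity by (subst integral_density) (auto simp: nn)
  finally show "(\<integral>q. H (q0 q) \<partial>lborel) = (LINT r:{0<..}|lborel. 4 * pi * sinh r ^ 2 * cosh r * H (cosh r))"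
    by (simp add: dens set_lebesgue_integral_def)
  have "integrable lborel (\<lambda>q. H (q0 q)) \<longleftrightarrow> integrable (distr lborel borel rapidity) (\<lambda>r. H (cosh r))"
    by (subst integrable_distr_eq) (auto simp: cosh_rapidity)
  also have "\<dots> \<longleftrightarrow> integrable lborel (\<lambda>r. radial_density r *\<^sub>R H (cosh r))"
    unfolding distr_lborel_rapidity by (subst integrable_density) (auto simp: nn)
  finally show "integrable lborel (\<lambda>q. H (q0 q)) \<longleftrightarrow>
      set_integrable lborel {0<..} (\<lambda>r. 4 * pi * sinh r ^ 2 * cosh r * H (cosh r))"
    by (simp add: dens set_integrable_def)
qed

section \<open>Coordinate symmetries and isotropy of radial weights\<close>

definition signed_perm :: "('n \<Rightarrow> 'n) \<Rightarrow> ('n \<Rightarrow> real) \<Rightarrow> real^'n \<Rightarrow> real^'n" where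
  "signed_perm \<sigma> \<epsilon> q = (\<chi> k. \<epsilon> k * q $ \<sigma> k)"

lemma borel_measurable_signed_perm [measurable]: "signed_perm \<sigma> \<epsilon> \<in> borel_measurable borel"
  unfolding signed_perm_def[abs_def]
  by (intro borel_measurable_continuous_onI linear_continuous_on bounded_linearI')
     (auto simp: vec_eq_iff algebra_simps)

lemma prod_Basis_vec: "(\<Prod>b\<in>(Basis::(real^'n) set). f b) = (\<Prod>i\<in>UNIV. f (axis i 1))"
proof -
  have "inj (\<lambda>i::'n. axis i (1::real))"
    by (auto simp: inj_def axis_eq_axis)
  then show ?thesis
    by (simp add: Basis_vec_def prod.reindex UNION_singleton_eq_range)
qed

lemma vimage_signed_perm_box:
  fixes \<sigma> :: "'n::finite \<Rightarrow> 'n"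
  assumes bij: "bij \<sigma>" and eps: "\<And>k. \<epsilon> k = 1 \<or> \<epsilon> k = -1"
  shows "signed_perm \<sigma> \<epsilon> -` box l u =
    box (\<chi> j. if \<epsilon> (inv \<sigma> j) = 1 then l $ inv \<sigma> j else - u $ inv \<sigma> j)
        (\<chi> j. if \<epsilon> (inv \<sigma> j) = 1 then u $ inv \<sigma> j else - l $ inv \<sigma> j)"
proof -
  define \<tau> where "\<tau> = inv \<sigma>"
  have st: "\<sigma> (\<tau> j) = j" and ts: "\<tau> (\<sigma> j) = j" for j
    unfolding \<tau>_def using bij by (simp_all add: bij_is_surj surj_f_inv_f bij_is_inj inv_f_f)
  have "q \<in> signed_perm \<sigma> \<epsilon> -` box l u \<longleftrightarrow>
      q \<in> box (\<chi> j. if \<epsilon> (\<tau> j) = 1 then l $ \<tau> j else - u $ \<tau> j) (\<chi> j. if \<epsilon> (\<tau> j) = 1 then u $ \<tau> j else - l $ \<tau> j)"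
    for q
  proof -
    have "q \<in> signed_perm \<sigma> \<epsilon> -` box l u \<longleftrightarrow> (\<forall>k. l $ k < \<epsilon> k * q $ \<sigma> k \<and> \<epsilon> k * q $ \<sigma> k < u $ k)"
      by (simp add: mem_box_cart signed_perm_def)
    also have "\<dots> \<longleftrightarrow> (\<forall>j. l $ \<tau> j < \<epsilon> (\<tau> j) * q $ j \<and> \<epsilon> (\<tau> j) * q $ j < u $ \<tau> j)"
      by (metis st ts)
    also have "\<dots> \<longleftrightarrow> q \<in> box (\<chi> j. if \<epsilon> (\<tau> j) = 1 then l $ \<tau> j else - u $ \<tau> j)
        (\<chi> j. if \<epsilon> (\<tau> j) = 1 then u $ \<tau> j else - l $ \<tau> j)"
      unfolding mem_box_cart using eps
      by (auto; metis add.inverse_inverse minus_less_iff mult_minus_left mult_1 eps)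
    finally show ?thesis .
  qed
  then show ?thesis unfolding \<tau>_def by blast
qed

lemma distr_lborel_signed_perm:
  fixes \<sigma> :: "'n::finite \<Rightarrow> 'n"
  assumes bij: "bij \<sigma>" and eps: "\<And>k. \<epsilon> k = 1 \<or> \<epsilon> k = -1"
  shows "distr lborel borel (signed_perm \<sigma> \<epsilon>) = lborel"
proof (rule lborel_eqI[symmetric])
  define \<tau> where "\<tau> = inv \<sigma>"
  have bij\<tau>: "bij \<tau>" unfolding \<tau>_def using bij by (simp add: bij_imp_bij_inv)
  fix l u :: "real^'n"
  assume le: "\<And>b. b \<in> Basis \<Longrightarrow> l \<bullet> b \<le> u \<bullet> b"
  have le': "l $ i \<le> u $ i" for i using le[of "axis i 1"] by (auto simp: Basis_vec_def inner_axis)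
  define l' :: "real^'n" where "l' = (\<chi> j. if \<epsilon> (\<tau> j) = 1 then l $ \<tau> j else - u $ \<tau> j)"
  define u' :: "real^'n" where "u' = (\<chi> j. if \<epsilon> (\<tau> j) = 1 then u $ \<tau> j else - l $ \<tau> j)"
  have "signed_perm \<sigma> \<epsilon> -` box l u = box l' u'"
    unfolding l'_def u'_def \<tau>_def by (intro vimage_signed_perm_box bij eps)
  then have "emeasure (distr lborel borel (signed_perm \<sigma> \<epsilon>)) (box l u) = emeasure lborel (box l' u')"
    by (subst emeasure_distr) simp_all
  also have "\<dots> = (\<Prod>b\<in>Basis. (u' - l') \<bullet> b)"
  proof (rule emeasure_lborel_box)
    show "l' \<bullet> b \<le> u' \<bullet> b" if "b \<in> Basis" for b
      using that le' by (auto simp: Basis_vec_def inner_axis l'_def u'_def)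
  qed
  also have "\<dots> = (\<Prod>j\<in>UNIV. (u - l) $ \<tau> j)"
    by (simp add: prod_Basis_vec inner_axis l'_def u'_def) (rule arg_cong[where f=ennreal], rule prod.cong, auto)
  also have "\<dots> = (\<Prod>b\<in>Basis. (u - l) \<bullet> b)"
    using prod.reindex_bij_betw[OF bij\<tau>, of "\<lambda>j. (u - l) $ j"] by (simp add: prod_Basis_vec inner_axis)
  finally show "emeasure (distr lborel borel (signed_perm \<sigma> \<epsilon>)) (box l u) = (\<Prod>b\<in>Basis. (u - l) \<bullet> b)" .
qed simp

lemma integral_signed_perm:
  fixes \<sigma> :: "'n::finite \<Rightarrow> 'n" and f :: "real^'n \<Rightarrow> 'b::{banach, second_countable_topology}"
  assumes "bij \<sigma>" and "\<And>k. \<epsilon> k = 1 \<or> \<epsilon> k = -1" and [measurable]: "f \<in> borel_measurable borel"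
  shows "(\<integral>q. f (signed_perm \<sigma> \<epsilon> q) \<partial>lborel) = (\<integral>q. f q \<partial>lborel)"
proof -
  have "(\<integral>q. f (signed_perm \<sigma> \<epsilon> q) \<partial>lborel) = integral\<^sup>L (distr lborel borel (signed_perm \<sigma> \<epsilon>)) f"
    by (subst integral_distr) auto
  then show ?thesis using distr_lborel_signed_perm[OF assms(1,2)] by simp
qed

lemma q0_signed_perm:
  assumes bij: "bij \<sigma>" and eps: "\<And>k. \<epsilon> k = 1 \<or> \<epsilon> k = -1"
  shows "q0 (signed_perm \<sigma> \<epsilon> q) = q0 q"
proof -
  have sq: "\<epsilon> k * q $ \<sigma> k * (\<epsilon> k * q $ \<sigma> k) = q $ \<sigma> k * q $ \<sigma> k" for k
    using eps[of k] by auto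
  have "signed_perm \<sigma> \<epsilon> q \<bullet> signed_perm \<sigma> \<epsilon> q = (\<Sum>k\<in>UNIV. q $ \<sigma> k * q $ \<sigma> k)"
    unfolding signed_perm_def inner_vec_def by (simp only: vec_lambda_beta inner_real_def sq)
  also have "\<dots> = q \<bullet> q"
    using sum.reindex_bij_betw[OF bij, of "\<lambda>k. q $ k * q $ k"] by (simp add: inner_vec_def)
  finally have "norm (signed_perm \<sigma> \<epsilon> q) = norm q"
    by (simp add: norm_eq_sqrt_inner)
  then show ?thesis by (simp add: q0_def)
qed

lemma integral_radial_scaleR_eq_0:
  fixes H :: "real \<Rightarrow> real"
  assumes [measurable]: "H \<in> borel_measurable borel"
  shows "(\<integral>q. H (q0 q) *\<^sub>R q \<partial>lborel) = (0::vec3)"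
proof -
  have neg: "signed_perm id (\<lambda>_. -1) q = - q" for q :: vec3
    by (simp add: signed_perm_def vec_eq_iff)
  have "(\<integral>q. H (q0 q) *\<^sub>R q \<partial>lborel) = (\<integral>q. H (q0 (signed_perm id (\<lambda>_. -1) q)) *\<^sub>R signed_perm id (\<lambda>_. -1) q \<partial>lborel)"
    by (rule integral_signed_perm[symmetric]) auto
  also have "\<dots> = - (\<integral>q. H (q0 q) *\<^sub>R q \<partial>lborel)"
    by (subst q0_signed_perm[OF bij_id]) (auto simp: neg simp flip: integral_minus)
  finally have "(\<integral>q. H (q0 q) *\<^sub>R q \<partial>lborel) + (\<integral>q. H (q0 q) *\<^sub>R q \<partial>lborel) = 0"
    by (simp only: eq_neg_iff_add_eq_0)
  then have "(2::real) *\<^sub>R (\<integral>q. H (q0 q) *\<^sub>R q \<partial>lborel) = 0"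
    by (simp only: scaleR_2)
  then show ?thesis by (metis scaleR_eq_0_iff zero_neq_numeral)
qed

lemma integral_radial_mult_component_eq_0:
  fixes H :: "real \<Rightarrow> real" and i j :: 3
  assumes [measurable]: "H \<in> borel_measurable borel" and ij: "i \<noteq> j"
  shows "(\<integral>q. H (q0 q) * (q $ i * q $ j) \<partial>lborel) = 0"
proof -
  define \<epsilon> where "\<epsilon> = (\<lambda>k::3. if k = i then -1 else (1::real))"
  have eps: "\<epsilon> k = 1 \<or> \<epsilon> k = -1" for k by (simp add: \<epsilon>_def)
  have "(\<integral>q. H (q0 q) * (q $ i * q $ j) \<partial>lborel)
      = (\<integral>q. H (q0 (signed_perm id \<epsilon> q)) * (signed_perm id \<epsilon> q $ i * signed_perm id \<epsilon> q $ j) \<partial>lborel)"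
    by (rule integral_signed_perm[symmetric]) (auto simp: eps)
  also have "\<dots> = - (\<integral>q. H (q0 q) * (q $ i * q $ j) \<partial>lborel)"
    using ij by (subst q0_signed_perm[OF bij_id eps]) (simp add: signed_perm_def \<epsilon>_def flip: integral_minus)
  finally show ?thesis by linarith
qed

lemma integral_radial_component_sq_swap:
  fixes H :: "real \<Rightarrow> real" and i j :: 3
  assumes [measurable]: "H \<in> borel_measurable borel"
  shows "(\<integral>q. H (q0 q) * (q $ i)^2 \<partial>lborel) = (\<integral>q. H (q0 q) * (q $ j)^2 \<partial>lborel)"
proof -
  define \<sigma> where "\<sigma> = (\<lambda>k::3. if k = i then j else if k = j then i else k)"
  have "\<sigma> (\<sigma> k) = k" for k by (auto simp: \<sigma>_def)
  then have bij: "bij \<sigma>" by (metis involuntory_imp_bij)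
  have "(\<integral>q. H (q0 q) * (q $ j)^2 \<partial>lborel)
      = (\<integral>q. H (q0 (signed_perm \<sigma> (\<lambda>_. 1) q)) * (signed_perm \<sigma> (\<lambda>_. 1) q $ j)^2 \<partial>lborel)"
    by (rule integral_signed_perm[symmetric, OF bij]) auto
  also have "\<dots> = (\<integral>q. H (q0 q) * (q $ i)^2 \<partial>lborel)"
    by (subst q0_signed_perm[OF bij]) (simp_all add: signed_perm_def \<sigma>_def)
  finally show ?thesis ..
qed

lemma integrable_radial_mult_components:
  fixes H :: "real \<Rightarrow> real"
  assumes [measurable]: "H \<in> borel_measurable borel"
    and int: "integrable lborel (\<lambda>q::vec3. H (q0 q) * norm q ^ 2)"
  shows "integrable lborel (\<lambda>q::vec3. H (q0 q) * (q $ i * q $ j))"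
proof (rule Bochner_Integration.integrable_bound[OF int])
  show "AE q in lborel. norm (H (q0 q) * (q $ i * q $ j)) \<le> norm (H (q0 q) * norm q ^ 2)"
  proof (intro AE_I2)
    fix q :: vec3
    have "\<bar>q $ i * q $ j\<bar> \<le> norm q ^ 2"
      unfolding abs_mult power2_eq_square by (intro mult_mono component_le_norm_cart) auto
    then show "norm (H (q0 q) * (q $ i * q $ j)) \<le> norm (H (q0 q) * norm q ^ 2)"
      by (simp add: abs_mult mult_left_mono)
  qed
qed measurable

lemma integral_radial_component_sq:
  fixes H :: "real \<Rightarrow> real" and i :: 3
  assumes [measurable]: "H \<in> borel_measurable borel"
    and int: "integrable lborel (\<lambda>q::vec3. H (q0 q) * norm q ^ 2)"
  shows "(\<integral>q. H (q0 q) * (q $ i)^2 \<partial>lborel) = (\<integral>q. H (q0 q) * norm q ^ 2 \<partial>lborel) / 3"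
proof -
  have "norm q ^ 2 = (\<Sum>k\<in>UNIV. (q $ k)^2)" for q :: vec3
    by (simp only: power2_norm_eq_inner) (simp add: inner_vec_def power2_eq_square)
  then have "(\<integral>q. H (q0 q) * norm q ^ 2 \<partial>lborel) = (\<integral>q. (\<Sum>k\<in>UNIV. H (q0 q) * (q $ k)^2) \<partial>lborel)"
    by (simp add: sum_distrib_left)
  also have "\<dots> = (\<Sum>k\<in>UNIV. (\<integral>q. H (q0 q) * (q $ k)^2 \<partial>lborel))"
    using integrable_radial_mult_components[OF assms] by (simp add: power2_eq_square)
  also have "\<dots> = (\<Sum>k\<in>(UNIV::3 set). (\<integral>q. H (q0 q) * (q $ i)^2 \<partial>lborel))"
    by (rule sum.cong) (auto intro: integral_radial_component_sq_swap[symmetric])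
  finally show ?thesis by simp
qed

lemma integral_radial_second_moment:
  fixes H :: "real \<Rightarrow> real" and c :: vec3
  assumes [measurable]: "H \<in> borel_measurable borel"
    and int: "integrable lborel (\<lambda>q::vec3. H (q0 q) * norm q ^ 2)"
  shows "(\<integral>q. ((c \<bullet> q) * H (q0 q)) *\<^sub>R q \<partial>lborel) = ((\<integral>q. H (q0 q) * norm q ^ 2 \<partial>lborel) / 3) *\<^sub>R c"
proof (rule vec_eq_iff[THEN iffD2], rule allI)
  fix i :: 3
  note int_ij = integrable_radial_mult_components[OF assms]
  have "integrable lborel (\<lambda>q. ((c \<bullet> q) * H (q0 q)) *\<^sub>R q)"
  proof (rule Bochner_Integration.integrable_bound[OF integrable_mult_right[OF int, of "norm c"]])
    show "AE q in lborel. norm (((c \<bullet> q) * H (q0 q)) *\<^sub>R q) \<le> norm (norm c * (H (q0 q) * norm q ^ 2))"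
    proof (intro AE_I2)
      fix q :: vec3
      have "\<bar>c \<bullet> q\<bar> * norm q \<le> norm c * norm q * norm q"
        by (intro mult_right_mono Cauchy_Schwarz_ineq2) auto
      then have "\<bar>c \<bullet> q\<bar> * norm q \<le> norm c * norm q ^ 2"
        by (simp add: power2_eq_square mult.assoc)
      then have "\<bar>H (q0 q)\<bar> * (\<bar>c \<bullet> q\<bar> * norm q) \<le> \<bar>H (q0 q)\<bar> * (norm c * norm q ^ 2)"
        by (rule mult_left_mono) simp
      then show "norm (((c \<bullet> q) * H (q0 q)) *\<^sub>R q) \<le> norm (norm c * (H (q0 q) * norm q ^ 2))"
        by (simp add: abs_mult mult_ac)
    qed
  qed measurable
  then have "(\<integral>q. ((c \<bullet> q) * H (q0 q)) *\<^sub>R q \<partial>lborel) $ i = (\<integral>q. (((c \<bullet> q) * H (q0 q)) *\<^sub>R q) $ i \<partial>lborel)"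
    unfolding cart_eq_inner_axis by (rule integral_inner_left[symmetric])
  also have "\<dots> = (\<integral>q. (\<Sum>j\<in>UNIV. c $ j * (H (q0 q) * (q $ j * q $ i))) \<partial>lborel)"
    by (simp add: inner_vec_def sum_distrib_left sum_distrib_right mult_ac)
  also have "\<dots> = (\<Sum>j\<in>UNIV. c $ j * (\<integral>q. H (q0 q) * (q $ j * q $ i) \<partial>lborel))"
    using int_ij by simp
  also have "\<dots> = (\<Sum>j\<in>UNIV. if j = i then c $ i * (\<integral>q. H (q0 q) * (q $ i)^2 \<partial>lborel) else 0)"
    by (rule sum.cong) (auto simp: power2_eq_square integral_radial_mult_component_eq_0)
  also have "\<dots> = c $ i * (\<integral>q. H (q0 q) * (q $ i)^2 \<partial>lborel)"
    by simp
  finally show "(\<integral>q. ((c \<bullet> q) * H (q0 q)) *\<^sub>R q \<partial>lborel) $ i = (((\<integral>q. H (q0 q) * norm q ^ 2 \<partial>lborel) / 3) *\<^sub>R c) $ i"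
    using integral_radial_component_sq[OF assms, of i] by simp
qed

section \<open>Moments of the Juettner distribution\<close>

lemma integral_q0_exp_eq_hyp_moment:
  fixes g :: "real \<Rightarrow> real"
  assumes [measurable]: "g \<in> borel_measurable borel"
    and g: "\<And>r. 0 < r \<Longrightarrow> sinh r ^ 2 * cosh r * g (cosh r) = sinh r ^ k * cosh r ^ m"
  shows "(\<integral>q. g (q0 q) * exp (- b * q0 q) \<partial>lborel) = 4 * pi * hyp_moment k m b"
proof -
  have "(\<integral>q. g (q0 q) * exp (- b * q0 q) \<partial>lborel)
      = (LINT r:{0<..}|lborel. 4 * pi * sinh r ^ 2 * cosh r * (g (cosh r) * exp (- b * cosh r)))"
    by (rule integral_q0_radial) measurable
  also have "\<dots> = (LINT r:{0<..}|lborel. 4 * pi * (sinh r ^ k * cosh r ^ m * exp (- b * cosh r)))"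
  proof (rule set_lebesgue_integral_cong, simp, intro allI impI)
    fix r :: real assume "r \<in> {0<..}"
    then have "4 * pi * sinh r ^ 2 * cosh r * (g (cosh r) * exp (- b * cosh r))
        = 4 * pi * ((sinh r ^ 2 * cosh r * g (cosh r)) * exp (- b * cosh r))"
      by (simp only: mult.assoc)
    with g \<open>r \<in> {0<..}\<close> show "4 * pi * sinh r ^ 2 * cosh r * (g (cosh r) * exp (- b * cosh r))
        = 4 * pi * (sinh r ^ k * cosh r ^ m * exp (- b * cosh r))" by simp
  qed
  finally show ?thesis by (simp add: hyp_moment_def)
qed

lemma integrable_q0_power_exp:
  assumes b: "(b::real) > 0"
  shows "integrable lborel (\<lambda>q::vec3. q0 q ^ k * exp (- b * q0 q))"
proof -
  have "set_integrable lborel {0<..} (\<lambda>r. 4 * pi * (sinh r ^ 2 * cosh r ^ (k + 1) * exp (- b * cosh r)))"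
    by (intro set_integrable_mult_right set_integrable_sinh_cosh_power_exp b)
  then have "set_integrable lborel {0<..} (\<lambda>r. 4 * pi * sinh r ^ 2 * cosh r * (cosh r ^ k * exp (- b * cosh r)))"
    by (simp add: mult_ac)
  then show ?thesis
    using integrable_q0_radial[of "\<lambda>c. c ^ k * exp (- b * c)"] by simp
qed

lemma Mfun_eq_hyp_moment: "Mfun b = 4 * pi * hyp_moment 2 1 b"
  unfolding Mfun_def using integral_q0_exp_eq_hyp_moment[of "\<lambda>_. 1" 2 1 b] by simp

lemma Mfun_pos: "(b::real) > 0 \<Longrightarrow> Mfun b > 0"
  using hyp_moment_2_pos[of b 1] by (simp add: Mfun_eq_hyp_moment)

lemma borel_measurable_J0 [measurable]: "J0 b \<in> borel_measurable borel"
  unfolding J0_def[abs_def] by measurable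

lemma J0_pos: "(b::real) > 0 \<Longrightarrow> 0 < J0 b q"
  using Mfun_pos[of b] by (simp add: J0_def)

lemma sqrtJ0_mult_self: "(b::real) > 0 \<Longrightarrow> sqrtJ0 b q * sqrtJ0 b q = J0 b q"
  using J0_pos[of b q] by (simp add: sqrtJ0_def)

lemma sqrtJ0_pos: "(b::real) > 0 \<Longrightarrow> 0 < sqrtJ0 b q"
  using J0_pos[of b q] by (simp add: sqrtJ0_def)

lemma borel_measurable_sqrtJ0 [measurable]: "sqrtJ0 b \<in> borel_measurable borel"
  unfolding sqrtJ0_def[abs_def] by measurable

lemma integrable_J0_bound:
  fixes f :: "vec3 \<Rightarrow> 'a::{banach, second_countable_topology}"
  assumes b: "(b::real) > 0" and [measurable]: "f \<in> borel_measurable lborel"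
    and bound: "\<And>q. norm (f q) \<le> C * q0 q ^ k * J0 b q"
  shows "integrable lborel f"
proof (rule Bochner_Integration.integrable_bound)
  show "integrable lborel (\<lambda>q. C / Mfun b * (q0 q ^ k * exp (- b * q0 q)))"
    using integrable_q0_power_exp[OF b] by simp
  show "AE q in lborel. norm (f q) \<le> norm (C / Mfun b * (q0 q ^ k * exp (- b * q0 q)))"
  proof (intro AE_I2)
    fix q
    have "C * q0 q ^ k * J0 b q = C / Mfun b * (q0 q ^ k * exp (- b * q0 q))"
      by (simp add: J0_def)
    then show "norm (f q) \<le> norm (C / Mfun b * (q0 q ^ k * exp (- b * q0 q)))"
      using bound[of q] by (metis abs_ge_self order_trans real_norm_def)
  qed
qed simp

lemma integral_J0_eq_hyp_moment:
  fixes g :: "real \<Rightarrow> real"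
  assumes "g \<in> borel_measurable borel"
    and "\<And>r. 0 < r \<Longrightarrow> sinh r ^ 2 * cosh r * g (cosh r) = sinh r ^ k * cosh r ^ m"
  shows "(\<integral>q. g (q0 q) * J0 b q \<partial>lborel) = hyp_moment k m b / hyp_moment 2 1 b"
proof -
  have "(\<integral>q. g (q0 q) * J0 b q \<partial>lborel) = (\<integral>q. g (q0 q) * exp (- b * q0 q) \<partial>lborel) / Mfun b"
    unfolding J0_def by (simp flip: integral_divide_zero)
  also have "\<dots> = 4 * pi * hyp_moment k m b / Mfun b"
    by (simp only: integral_q0_exp_eq_hyp_moment[OF assms])
  finally show ?thesis
    by (simp add: Mfun_eq_hyp_moment)
qed

context
  fixes b :: real
  assumes b: "b > 0"
begin

lemma integrable_q0_power_J0: "integrable lborel (\<lambda>q. q0 q ^ k * J0 b q)"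
  by (rule integrable_J0_bound[OF b, where C=1 and k=k])
     (auto intro!: mult_nonneg_nonneg less_imp_le[OF J0_pos[OF b]])

lemma integrable_J0_div_q0: "integrable lborel (\<lambda>q. J0 b q / q0 q)"
proof (rule integrable_J0_bound[OF b, where C=1 and k=0])
  fix q :: vec3
  have "J0 b q / q0 q \<le> J0 b q"
    using J0_pos[OF b, of q] q0_ge_1[of q] by (simp add: divide_le_eq mult_le_cancel_left1)
  then show "norm (J0 b q / q0 q) \<le> 1 * q0 q ^ 0 * J0 b q"
    using J0_pos[OF b, of q] by (simp add: abs_of_pos)
qed measurable

lemma integrable_J0_scaleR: "integrable lborel (\<lambda>q. J0 b q *\<^sub>R q)"
proof (rule integrable_J0_bound[OF b, where C=1 and k=1])
  fix q :: vec3
  have "norm q * J0 b q \<le> q0 q * J0 b q"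
    using J0_pos[OF b, of q] by (intro mult_right_mono norm_le_q0) auto
  then show "norm (J0 b q *\<^sub>R q) \<le> 1 * q0 q ^ 1 * J0 b q"
    using J0_pos[OF b, of q] by (simp add: mult.commute)
qed measurable

lemma integrable_J0_div_q0_scaleR: "integrable lborel (\<lambda>q. (J0 b q / q0 q) *\<^sub>R q)"
  by (rule integrable_J0_bound[OF b, where C=1 and k=0])
     (auto simp: abs_mult divide_le_eq q0_pos J0_pos[OF b, THEN less_imp_le] intro!: mult_left_mono norm_le_q0)

lemma integrable_J0_div_q0_norm_sq: "integrable lborel (\<lambda>q. J0 b q / q0 q * norm q ^ 2)"
proof (rule integrable_J0_bound[OF b, where C=1 and k=1])
  fix q :: vec3
  have "norm q ^ 2 \<le> q0 q * q0 q"
    using power_mono[OF norm_le_q0[of q], of 2] by (simp add: power2_eq_square)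
  then have "norm q ^ 2 / q0 q \<le> q0 q"
    using q0_pos[of q] by (simp add: divide_le_eq)
  then have "J0 b q * (norm q ^ 2 / q0 q) \<le> J0 b q * q0 q"
    using J0_pos[OF b, of q] by (intro mult_left_mono) auto
  then show "norm (J0 b q / q0 q * norm q ^ 2) \<le> 1 * q0 q ^ 1 * J0 b q"
    using J0_pos[OF b, of q] by (simp add: mult.commute)
qed measurable

lemma integrable_J0_div_q0_second_moment: "integrable lborel (\<lambda>q. ((c \<bullet> q) * (J0 b q / q0 q)) *\<^sub>R q)"
proof (rule integrable_J0_bound[OF b, where C="norm c" and k=1])
  fix q :: vec3
  have "\<bar>c \<bullet> q\<bar> * norm q \<le> norm c * (q0 q * q0 q)"
    using Cauchy_Schwarz_ineq2[of c q] norm_le_q0[of q]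
    by (intro order_trans[OF mult_right_mono[OF Cauchy_Schwarz_ineq2]]) (auto simp: mult.assoc intro!: mult_left_mono mult_mono)
  then have "J0 b q / q0 q * (\<bar>c \<bullet> q\<bar> * norm q) \<le> J0 b q / q0 q * (norm c * (q0 q * q0 q))"
    using J0_pos[OF b, of q] by (intro mult_left_mono) auto
  then show "norm (((c \<bullet> q) * (J0 b q / q0 q)) *\<^sub>R q) \<le> norm c * q0 q ^ 1 * J0 b q"
    using J0_pos[OF b, of q] by (simp add: abs_mult abs_of_pos mult_ac)
qed measurable

lemma integral_J0: "(\<integral>q. J0 b q \<partial>lborel) = 1"
  using integral_J0_eq_hyp_moment[of "\<lambda>_. 1" 2 1 b] hyp_moment_2_pos[OF b, of 1] by simp

lemma integral_J0_div_q0: "(\<integral>q. J0 b q / q0 q \<partial>lborel) = alpha0 b"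
  using integral_J0_eq_hyp_moment[of "\<lambda>c. 1 / c" 2 0 b]
  by (simp add: alpha0_eq_hyp_moment[OF b])

lemma integral_q0_J0: "(\<integral>q. q0 q * J0 b q \<partial>lborel) = Psi b"
  using integral_J0_eq_hyp_moment[of "\<lambda>c. c" 2 2 b] hyp_moment_2_pos[OF b, of 1] b
  by (simp add: power2_eq_square Psi_eq alpha0_eq_hyp_moment[OF b] hyp_moment_2_2[OF b]
      hyp_moment_4_0[OF b] field_simps)

lemma integral_J0_div_q0_norm_sq: "(\<integral>q. J0 b q / q0 q * norm q ^ 2 \<partial>lborel) = 3 / b"
proof -
  have "(\<integral>q. (q0 q ^ 2 - 1) / q0 q * J0 b q \<partial>lborel) = hyp_moment 4 0 b / hyp_moment 2 1 b"
    by (rule integral_J0_eq_hyp_moment)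
       (measurable, simp only: cosh_square_eq, simp add: power2_eq_square power4_eq_xxxx)
  moreover have "norm q ^ 2 = q0 q ^ 2 - 1" for q :: vec3
    by (simp add: q0_def)
  ultimately show ?thesis
    using hyp_moment_2_pos[OF b, of 1] b by (simp add: hyp_moment_4_0[OF b] mult_ac)
qed

lemma integral_J0_scaleR: "(\<integral>q. J0 b q *\<^sub>R q \<partial>lborel) = 0"
  using integral_radial_scaleR_eq_0[of "\<lambda>c. exp (- b * c) / Mfun b"] unfolding J0_def by simp

lemma integral_J0_div_q0_scaleR: "(\<integral>q. (J0 b q / q0 q) *\<^sub>R q \<partial>lborel) = 0"
  using integral_radial_scaleR_eq_0[of "\<lambda>c. exp (- b * c) / Mfun b / c"] unfolding J0_def by simp

lemma integral_J0_div_q0_second_moment: "(\<integral>q. ((c \<bullet> q) * (J0 b q / q0 q)) *\<^sub>R q \<partial>lborel) = (1 / b) *\<^sub>R c"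
  using integral_radial_second_moment[of "\<lambda>c. exp (- b * c) / Mfun b / c" c]
    integrable_J0_div_q0_norm_sq integral_J0_div_q0_norm_sq
  unfolding J0_def by simp

end

section \<open>The five-dimensional space \<open>N\<close>\<close>

lemma integral_lincomb:
  fixes f g :: "'a \<Rightarrow> real" and h :: "'a \<Rightarrow> 'b::{real_inner, banach, second_countable_topology}"
  assumes "integrable M f" "integrable M g" "integrable M h"
  shows "(\<integral>x. a * f x + b * g x + c \<bullet> h x \<partial>M) = a * integral\<^sup>L M f + b * integral\<^sup>L M g + c \<bullet> integral\<^sup>L M h"
  using assms by (simp add: Bochner_Integration.integral_add)

lemma integral_lincomb_scaleR:
  fixes f g h :: "'a \<Rightarrow> 'b::{real_normed_vector, banach, second_countable_topology}"
  assumes "integrable M f" "integrable M g" "integrable M h"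
  shows "(\<integral>x. a *\<^sub>R f x + b *\<^sub>R g x + h x \<partial>M) = a *\<^sub>R integral\<^sup>L M f + b *\<^sub>R integral\<^sup>L M g + integral\<^sup>L M h"
  using assms by (simp add: Bochner_Integration.integral_add)

definition N_elem :: "real \<Rightarrow> real \<Rightarrow> real \<Rightarrow> vec3 \<Rightarrow> vec3 \<Rightarrow> real" where
  "N_elem b a b0 c q = (a + b0 * q0 q + c \<bullet> q) * sqrtJ0 b q"

lemma inN_iff_N_elem: "inN b g \<longleftrightarrow> (\<exists>a b0 c. g = N_elem b a b0 c)"
  unfolding inN_def N_elem_def by (auto simp: fun_eq_iff)

lemma borel_measurable_N_elem [measurable]: "N_elem b a b0 c \<in> borel_measurable borel"
  unfolding N_elem_def[abs_def] by measurable

lemma N_elem_coeffs_eq_0: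
  assumes b: "b > 0" and zero: "\<forall>q. (a + b0 * q0 q + c \<bullet> q) * sqrtJ0 b q = 0"
  shows "a = 0 \<and> b0 = 0 \<and> c = 0"
proof -
  have z: "a + b0 * q0 q + c \<bullet> q = 0" for q
    using zero sqrtJ0_pos[OF b, of q] by auto
  have "c \<bullet> c = 0"
    using z[of c] z[of "- c"] by (simp add: q0_def)
  then have c: "c = 0" by simp
  have "a + b0 = 0"
    using z[of 0] by (simp add: q0_def)
  moreover have "a + b0 * sqrt 2 = 0"
    using z[of "axis 1 1"] c by (simp add: q0_def)
  ultimately have "b0 * sqrt 2 = b0 * 1"
    by linarith
  then have "b0 = 0 \<or> sqrt 2 = 1"
    by (simp only: mult_cancel_left)
  then have "b0 = 0" by simp
  with \<open>a + b0 = 0\<close> c show ?thesis by simp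
qed

context
  fixes b :: real
  assumes b: "b > 0"
begin

lemma integrable_L2_sqrtJ0_bound:
  fixes f :: "vec3 \<Rightarrow> 'a::{banach, second_countable_topology}"
  assumes h: "L2 h" and [measurable]: "f \<in> borel_measurable lborel"
    and bound: "\<And>q. norm (f q) \<le> \<bar>h q\<bar> * sqrtJ0 b q"
  shows "integrable lborel f"
proof (rule Bochner_Integration.integrable_bound)
  show "integrable lborel (\<lambda>q. (h q)^2 + J0 b q)"
    using h integrable_q0_power_J0[OF b, of 0] by (simp add: L2_def)
  show "AE q in lborel. norm (f q) \<le> norm ((h q)^2 + J0 b q)"
  proof (intro AE_I2)
    fix q
    have "0 \<le> (\<bar>h q\<bar> - sqrtJ0 b q)^2" by simp
    then have "2 * (\<bar>h q\<bar> * sqrtJ0 b q) \<le> (h q)^2 + J0 b q"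
      using sqrtJ0_mult_self[OF b, of q] by (simp add: power2_eq_square algebra_simps)
    moreover have "0 \<le> \<bar>h q\<bar> * sqrtJ0 b q" "0 < J0 b q"
      using sqrtJ0_pos[OF b, of q] J0_pos[OF b, of q] by auto
    ultimately show "norm (f q) \<le> norm ((h q)^2 + J0 b q)"
      using bound[of q] by simp
  qed
qed simp

lemma
  assumes h: "L2 h"
  shows integrable_L2_mult_sqrtJ0: "integrable lborel (\<lambda>q. h q * sqrtJ0 b q)"
    and integrable_L2_mult_sqrtJ0_div_q0: "integrable lborel (\<lambda>q. h q * sqrtJ0 b q / q0 q)"
    and integrable_L2_mult_sqrtJ0_div_q0_scaleR: "integrable lborel (\<lambda>q. (h q * sqrtJ0 b q / q0 q) *\<^sub>R q)"
proof -
  have [measurable]: "h \<in> borel_measurable lborel" and s: "0 < sqrtJ0 b q" for q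
    using h sqrtJ0_pos[OF b] by (auto simp: L2_def)
  show "integrable lborel (\<lambda>q. h q * sqrtJ0 b q)"
    by (rule integrable_L2_sqrtJ0_bound[OF h]) (auto simp: abs_mult s less_imp_le)
  show "integrable lborel (\<lambda>q. h q * sqrtJ0 b q / q0 q)"
  proof (rule integrable_L2_sqrtJ0_bound[OF h])
    fix q
    have "\<bar>h q\<bar> * sqrtJ0 b q * (1 / q0 q) \<le> \<bar>h q\<bar> * sqrtJ0 b q * 1"
      using q0_ge_1[of q] s[of q] by (intro mult_left_mono) auto
    then show "norm (h q * sqrtJ0 b q / q0 q) \<le> \<bar>h q\<bar> * sqrtJ0 b q"
      using s[of q] by (simp add: abs_mult)
  qed measurable
  show "integrable lborel (\<lambda>q. (h q * sqrtJ0 b q / q0 q) *\<^sub>R q)"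
  proof (rule integrable_L2_sqrtJ0_bound[OF h])
    fix q
    have "\<bar>h q\<bar> * sqrtJ0 b q * (norm q / q0 q) \<le> \<bar>h q\<bar> * sqrtJ0 b q * 1"
      using norm_le_q0[of q] s[of q] by (intro mult_left_mono) auto
    then show "norm ((h q * sqrtJ0 b q / q0 q) *\<^sub>R q) \<le> \<bar>h q\<bar> * sqrtJ0 b q"
      using s[of q] by (simp add: abs_mult)
  qed measurable
qed

lemma L2_N_elem: "L2 (N_elem b a b0 c)"
  unfolding L2_def
proof
  define K where "K = \<bar>a\<bar> + \<bar>b0\<bar> + norm c"
  show "integrable lborel (\<lambda>q. (N_elem b a b0 c q)^2)"
  proof (rule integrable_J0_bound[OF b, where C="K^2" and k=2])
    fix q :: vec3
    have "\<bar>a + b0 * q0 q + c \<bullet> q\<bar> \<le> \<bar>a\<bar> + \<bar>b0 * q0 q\<bar> + \<bar>c \<bullet> q\<bar>"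
      by (rule order_trans[OF abs_triangle_ineq add_right_mono[OF abs_triangle_ineq]])
    also have "\<dots> \<le> \<bar>a\<bar> + \<bar>b0\<bar> * q0 q + norm c * norm q"
      using Cauchy_Schwarz_ineq2[of c q] by (simp add: abs_mult)
    also have "\<dots> \<le> \<bar>a\<bar> * q0 q + \<bar>b0\<bar> * q0 q + norm c * q0 q"
      using q0_ge_1[of q] norm_le_q0[of q]
      by (intro add_mono mult_left_mono) (auto simp: mult_le_cancel_left1)
    also have "\<dots> = K * q0 q"
      by (simp add: K_def algebra_simps)
    finally have "\<bar>a + b0 * q0 q + c \<bullet> q\<bar>^2 \<le> (K * q0 q)^2"
      by (rule power_mono) simp
    then have "(a + b0 * q0 q + c \<bullet> q)^2 \<le> (K * q0 q)^2"
      by simp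
    then have "(a + b0 * q0 q + c \<bullet> q)^2 * J0 b q \<le> (K * q0 q)^2 * J0 b q"
      using J0_pos[OF b, of q] by (intro mult_right_mono) auto
    moreover have "(N_elem b a b0 c q)^2 = (a + b0 * q0 q + c \<bullet> q)^2 * J0 b q"
      unfolding N_elem_def power_mult_distrib power2_eq_square[of "sqrtJ0 b q"] sqrtJ0_mult_self[OF b] ..
    ultimately show "norm ((N_elem b a b0 c q)^2) \<le> K^2 * q0 q ^ 2 * J0 b q"
      using J0_pos[OF b, of q] by (simp add: power_mult_distrib abs_mult abs_of_pos)
  qed measurable
qed measurable

lemma N_elem_mult_sqrtJ0: "N_elem b a b0 c q * sqrtJ0 b q = (a + b0 * q0 q + c \<bullet> q) * J0 b q"
  unfolding N_elem_def mult.assoc sqrtJ0_mult_self[OF b] ..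

lemma nh_energy_N_elem: "nh_energy b (N_elem b a b0 c) = a + b0 * Psi b"
proof -
  have "N_elem b a b0 c q * sqrtJ0 b q = a * J0 b q + b0 * (q0 q * J0 b q) + c \<bullet> (J0 b q *\<^sub>R q)" for q
    unfolding N_elem_mult_sqrtJ0 by (simp add: algebra_simps)
  then have "nh_energy b (N_elem b a b0 c) = (\<integral>q. a * J0 b q + b0 * (q0 q * J0 b q) + c \<bullet> (J0 b q *\<^sub>R q) \<partial>lborel)"
    by (simp add: nh_energy_def)
  also have "\<dots> = a * (\<integral>q. J0 b q \<partial>lborel) + b0 * (\<integral>q. q0 q * J0 b q \<partial>lborel) + c \<bullet> (\<integral>q. J0 b q *\<^sub>R q \<partial>lborel)"
    using integrable_q0_power_J0[OF b, of 0] integrable_q0_power_J0[OF b, of 1]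
    by (intro integral_lincomb integrable_J0_scaleR[OF b]) simp_all
  also have "\<dots> = a + b0 * Psi b"
    by (simp add: integral_J0[OF b] integral_q0_J0[OF b] integral_J0_scaleR[OF b])
  finally show ?thesis .
qed

lemma nh_alpha_N_elem: "nh_alpha b (N_elem b a b0 c) = a * alpha0 b + b0"
proof -
  have "N_elem b a b0 c q * sqrtJ0 b q / q0 q = a * (J0 b q / q0 q) + b0 * J0 b q + c \<bullet> ((J0 b q / q0 q) *\<^sub>R q)" for q
    unfolding N_elem_mult_sqrtJ0 by (simp add: field_simps)
  then have "nh_alpha b (N_elem b a b0 c) = (\<integral>q. a * (J0 b q / q0 q) + b0 * J0 b q + c \<bullet> ((J0 b q / q0 q) *\<^sub>R q) \<partial>lborel)"
    by (simp add: nh_alpha_def)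
  also have "\<dots> = a * (\<integral>q. J0 b q / q0 q \<partial>lborel) + b0 * (\<integral>q. J0 b q \<partial>lborel) + c \<bullet> (\<integral>q. (J0 b q / q0 q) *\<^sub>R q \<partial>lborel)"
    using integrable_q0_power_J0[OF b, of 0]
    by (intro integral_lincomb integrable_J0_div_q0[OF b] integrable_J0_div_q0_scaleR[OF b]) simp_all
  also have "\<dots> = a * alpha0 b + b0"
    by (simp add: integral_J0[OF b] integral_J0_div_q0[OF b] integral_J0_div_q0_scaleR[OF b])
  finally show ?thesis .
qed

lemma nh_u_N_elem: "nh_u b (N_elem b a b0 c) = (1 / b) *\<^sub>R c"
proof -
  have "N_elem b a b0 c q * sqrtJ0 b q / q0 q = a * (J0 b q / q0 q) + b0 * J0 b q + (c \<bullet> q) * (J0 b q / q0 q)"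
    for q unfolding N_elem_mult_sqrtJ0 by (simp add: field_simps)
  then have "(N_elem b a b0 c q * sqrtJ0 b q / q0 q) *\<^sub>R q
      = a *\<^sub>R ((J0 b q / q0 q) *\<^sub>R q) + b0 *\<^sub>R (J0 b q *\<^sub>R q) + ((c \<bullet> q) * (J0 b q / q0 q)) *\<^sub>R q" for q
    by (simp only: scaleR_add_left scaleR_scaleR)
  then have "nh_u b (N_elem b a b0 c) = (\<integral>q. a *\<^sub>R ((J0 b q / q0 q) *\<^sub>R q) + b0 *\<^sub>R (J0 b q *\<^sub>R q)
      + ((c \<bullet> q) * (J0 b q / q0 q)) *\<^sub>R q \<partial>lborel)"
    by (simp add: nh_u_def)
  also have "\<dots> = a *\<^sub>R (\<integral>q. (J0 b q / q0 q) *\<^sub>R q \<partial>lborel) + b0 *\<^sub>R (\<integral>q. J0 b q *\<^sub>R q \<partial>lborel)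
      + (\<integral>q. ((c \<bullet> q) * (J0 b q / q0 q)) *\<^sub>R q \<partial>lborel)"
    by (intro integral_lincomb_scaleR integrable_J0_div_q0_scaleR[OF b] integrable_J0_scaleR[OF b]
        integrable_J0_div_q0_second_moment[OF b])
  also have "\<dots> = (1 / b) *\<^sub>R c"
    by (simp only: integral_J0_div_q0_scaleR[OF b] integral_J0_scaleR[OF b]
        integral_J0_div_q0_second_moment[OF b] scaleR_zero_right add_0)
  finally show ?thesis .
qed

lemma
  assumes h: "L2 h"
  shows integrable_wip_N_elem: "integrable lborel (\<lambda>q. h q * N_elem b a b0 c q / q0 q)"
    and wip_N_elem: "wip h (N_elem b a b0 c) = a * nh_alpha b h + b0 * nh_energy b h + c \<bullet> nh_u b h"
proof -
  have pw: "h q * N_elem b a b0 c q / q0 q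
      = a * (h q * sqrtJ0 b q / q0 q) + b0 * (h q * sqrtJ0 b q) + c \<bullet> ((h q * sqrtJ0 b q / q0 q) *\<^sub>R q)" for q
    by (simp add: N_elem_def field_simps)
  note int = integrable_L2_mult_sqrtJ0_div_q0[OF h] integrable_L2_mult_sqrtJ0[OF h]
    integrable_L2_mult_sqrtJ0_div_q0_scaleR[OF h]
  show "integrable lborel (\<lambda>q. h q * N_elem b a b0 c q / q0 q)"
    unfolding pw using int by (intro Bochner_Integration.integrable_add integrable_mult_right integrable_inner_right)
  show "wip h (N_elem b a b0 c) = a * nh_alpha b h + b0 * nh_energy b h + c \<bullet> nh_u b h"
    unfolding wip_def pw nh_alpha_def nh_energy_def nh_u_def by (rule integral_lincomb[OF int])
qed

lemma Pop_eq_N_elem: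
  "Pop b f = N_elem b ((Psi b * nh_alpha b f - nh_energy b f) / kappa0 b)
      ((alpha0 b * nh_energy b f - nh_alpha b f) / kappa0 b) (b *\<^sub>R nh_u b f)"
  using kappa0_pos[OF b] unfolding Pop_def N_elem_def by (auto simp: fun_eq_iff field_simps)

lemma nh_energy_Pop: "nh_energy b (Pop b f) = nh_energy b f"
proof -
  have "nh_energy b (Pop b f) = nh_energy b f * (alpha0 b * Psi b - 1) / kappa0 b"
    using kappa0_pos[OF b] by (simp add: Pop_eq_N_elem nh_energy_N_elem field_simps)
  then show ?thesis
    using kappa0_pos[OF b] by (simp add: kappa0_eq)
qed

lemma nh_alpha_Pop: "nh_alpha b (Pop b f) = nh_alpha b f"
proof -
  have "nh_alpha b (Pop b f) = nh_alpha b f * (alpha0 b * Psi b - 1) / kappa0 b"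
    using kappa0_pos[OF b] by (simp add: Pop_eq_N_elem nh_alpha_N_elem field_simps)
  then show ?thesis
    using kappa0_pos[OF b] by (simp add: kappa0_eq)
qed

lemma nh_u_Pop: "nh_u b (Pop b f) = nh_u b f"
  using b by (simp add: Pop_eq_N_elem nh_u_N_elem)

lemma wip_Pop:
  assumes "L2 g"
  shows "wip (Pop b f) g = (Psi b * nh_alpha b f * nh_alpha b g - nh_energy b f * nh_alpha b g
      - nh_alpha b f * nh_energy b g + alpha0 b * nh_energy b f * nh_energy b g) / kappa0 b
      + b * (nh_u b f \<bullet> nh_u b g)"
proof -
  have "wip (Pop b f) g = wip g (Pop b f)"
    unfolding wip_def by (simp add: mult.commute)
  also have "\<dots> = (Psi b * nh_alpha b f - nh_energy b f) / kappa0 b * nh_alpha b g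
      + (alpha0 b * nh_energy b f - nh_alpha b f) / kappa0 b * nh_energy b g + (b *\<^sub>R nh_u b f) \<bullet> nh_u b g"
    unfolding Pop_eq_N_elem by (rule wip_N_elem[OF assms])
  also have "\<dots> = (Psi b * nh_alpha b f * nh_alpha b g - nh_energy b f * nh_alpha b g
      - nh_alpha b f * nh_energy b g + alpha0 b * nh_energy b f * nh_energy b g) / kappa0 b
      + b * (nh_u b f \<bullet> nh_u b g)"
    by (simp add: diff_divide_distrib add_divide_distrib algebra_simps)
  finally show ?thesis .
qed

lemma wip_Pop_commute:
  assumes "L2 f" "L2 g"
  shows "wip (Pop b f) g = wip f (Pop b g)"
proof -
  have "wip f (Pop b g) = wip (Pop b g) f"
    unfolding wip_def by (simp add: mult.commute)
  then show ?thesis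
    unfolding wip_Pop[OF assms(1)] wip_Pop[OF assms(2)] by (simp add: mult_ac inner_commute)
qed

lemma wip_diff_Pop_N_elem:
  assumes f: "L2 f"
  shows "wip (\<lambda>q. f q - Pop b f q) (N_elem b a b0 c) = 0"
proof -
  have Pf: "L2 (Pop b f)" by (simp add: Pop_eq_N_elem L2_N_elem)
  have "wip (\<lambda>q. f q - Pop b f q) (N_elem b a b0 c) = wip f (N_elem b a b0 c) - wip (Pop b f) (N_elem b a b0 c)"
    unfolding wip_def left_diff_distrib diff_divide_distrib
    by (intro Bochner_Integration.integral_diff integrable_wip_N_elem f Pf)
  then show ?thesis
    unfolding wip_N_elem[OF f] wip_N_elem[OF Pf] nh_energy_Pop nh_alpha_Pop nh_u_Pop by simp
qed

end

theorem lemma4p4: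
  fixes \<beta>0 :: real
  assumes "\<beta>0 > 0"
  shows "(\<forall>a b0 (b::vec3). (\<forall>q. (a + b0 * q0 q + b \<bullet> q) * sqrtJ0 \<beta>0 q = 0)
            \<longrightarrow> a = 0 \<and> b0 = 0 \<and> b = 0)
       \<and> (\<forall>g. inN \<beta>0 g \<longrightarrow> L2 g)
       \<and> (\<forall>f. L2 f \<longrightarrow> inN \<beta>0 (Pop \<beta>0 f)
              \<and> (\<forall>g. inN \<beta>0 g \<longrightarrow> wip (\<lambda>q. f q - Pop \<beta>0 f q) g = 0))
       \<and> (\<forall>f g. L2 f \<longrightarrow> L2 g \<longrightarrow> wip (Pop \<beta>0 f) g = wip f (Pop \<beta>0 g))"
proof -
  have in_N: "inN \<beta>0 (Pop \<beta>0 f)" for f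
    unfolding inN_iff_N_elem Pop_eq_N_elem[OF assms] by blast
  have L2_N: "L2 g" if "inN \<beta>0 g" for g
    using that L2_N_elem[OF assms] by (auto simp: inN_iff_N_elem)
  have orth: "wip (\<lambda>q. f q - Pop \<beta>0 f q) g = 0" if "L2 f" "inN \<beta>0 g" for f g
    using that wip_diff_Pop_N_elem[OF assms] by (auto simp: inN_iff_N_elem)
  show ?thesis
    using N_elem_coeffs_eq_0[OF assms] L2_N in_N orth wip_Pop_commute[OF assms] by blast
qed

end
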